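(* For $\mathbf p\in\mathbb R^k$ with all $p_j>0$ and $\sum_jp_j=1$, define $$R(\mathbf p)=\frac{\|\mathbf p\|_{1/2}^{1/2}}{\|\mathbf p\|_{2/3}},\qquad\text{where }\|\mathbf p\|_r=\Big(\sum_{j=1}^kp_j^r\Big)^{1/r}.$$ Then $R(\mathbf p)\ge1$ for every such $\mathbf p$, and $\sup_{\mathbf p}R(\mathbf p)\in\Theta(k^{1/4})$, the supremum taken over all probability vectors in $\mathbb R^k$ with positive entries; this order is tight. *)

theory Defs
  imports Complex_Main "HOL-Library.Landau_Symbols"
begin

text \<open>Vectors in R^k are represented as functions nat => real, only indices j < k matter.\<close>

definition prob_vec :: "nat \<Rightarrow> (nat \<Rightarrow> real) \<Rightarrow> bool" where
  "prob_vec k p \<longleftrightarrow> (\<forall>j<k. p j > 0) \<and> (\<Sum>j<k. p j) = 1"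

definition lr_norm :: "nat \<Rightarrow> real \<Rightarrow> (nat \<Rightarrow> real) \<Rightarrow> real" where
  "lr_norm k r p = (\<Sum>j<k. p j powr r) powr (1 / r)"

definition ratioR :: "nat \<Rightarrow> (nat \<Rightarrow> real) \<Rightarrow> real" where
  "ratioR k p = lr_norm k (1/2) p powr (1/2) / lr_norm k (2/3) p"

definition supR :: "nat \<Rightarrow> real" where
  "supR k = Sup (ratioR k ` {p. prob_vec k p})"

end

theory Submission
  imports Defs "HOL-Analysis.Convex"
begin

text \<open>Write A = \<Sum>_j p_j^(1/2) and B = \<Sum>_j p_j^(2/3), so that R = A / B^(3/2).
  Both bounds are instances of Hoelder's inequality in the interpolation form
  \<Sum> a^\<theta> b^(1-\<theta>) \<le> (\<Sum> a)^\<theta> (\<Sum> b)^(1-\<theta>): with a = p^(1/2), b = p, \<theta> = 2/3 it gives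
  B \<le> A^(2/3), i.e. R \<ge> 1; with a = p^(2/3), b = 1, \<theta> = 3/4 it gives A \<le> B^(3/4) k^(1/4),
  and since B \<ge> \<Sum> p = 1 this yields R \<le> k^(1/4).
  The upper bound is attained up to a constant factor by one large entry and m = k - 1 small
  entries c = m^(-3/2)/2: this exponent makes the small entries contribute m c^(2/3) = O(1)
  to B but m c^(1/2) \<approx> m^(1/4) to A.\<close>

lemma Holder_ineq_sum:
  fixes a b :: "'i \<Rightarrow> real"
  assumes "finite I" "\<And>j. j \<in> I \<Longrightarrow> a j > 0" "\<And>j. j \<in> I \<Longrightarrow> b j > 0"
    and "0 \<le> \<theta>" "\<theta> \<le> 1"
  shows "(\<Sum>j\<in>I. a j powr \<theta> * b j powr (1 - \<theta>))
           \<le> (\<Sum>j\<in>I. a j) powr \<theta> * (\<Sum>j\<in>I. b j) powr (1 - \<theta>)"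
proof (cases "I = {}")
  case False
  define A B where "A = (\<Sum>j\<in>I. a j)" and "B = (\<Sum>j\<in>I. b j)"
  have "A > 0" "B > 0"
    unfolding A_def B_def using assms False by (auto intro: sum_pos)
  have "(\<Sum>j\<in>I. a j powr \<theta> * b j powr (1 - \<theta>)) / (A powr \<theta> * B powr (1 - \<theta>))
      = (\<Sum>j\<in>I. (a j / A) powr \<theta> * (b j / B) powr (1 - \<theta>))"
    by (simp add: sum_divide_distrib powr_divide)
  also have "\<dots> \<le> (\<Sum>j\<in>I. \<theta> * (a j / A) + (1 - \<theta>) * (b j / B))"
    using assms \<open>A > 0\<close> \<open>B > 0\<close> by (intro sum_mono Youngs_inequality_0) auto
  also have "\<dots> = 1"
    using \<open>A > 0\<close> \<open>B > 0\<close>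
    by (simp add: sum.distrib flip: sum_distrib_left sum_divide_distrib A_def B_def)
  finally show ?thesis
    using \<open>A > 0\<close> \<open>B > 0\<close> by (simp add: A_def B_def divide_le_eq)
qed simp

definition power_sum :: "nat \<Rightarrow> real \<Rightarrow> (nat \<Rightarrow> real) \<Rightarrow> real" where
  "power_sum k r p = (\<Sum>j<k. p j powr r)"

lemma prob_vec_pos: "prob_vec k p \<Longrightarrow> j < k \<Longrightarrow> p j > 0"
  unfolding prob_vec_def by blast

lemma prob_vec_sum: "prob_vec k p \<Longrightarrow> (\<Sum>j<k. p j) = 1"
  unfolding prob_vec_def by blast

lemma prob_vec_dim_pos: "prob_vec k p \<Longrightarrow> k > 0"
  unfolding prob_vec_def by (cases k) auto

lemma prob_vec_le_1:
  assumes "prob_vec k p" "j < k"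
  shows "p j \<le> 1"
proof -
  have "p j \<le> (\<Sum>i<k. p i)"
    using assms by (intro member_le_sum) (auto intro: less_imp_le prob_vec_pos)
  then show ?thesis
    using prob_vec_sum[OF assms(1)] by simp
qed

lemma power_sum_pos: "prob_vec k p \<Longrightarrow> power_sum k r p > 0"
  unfolding power_sum_def by (intro sum_pos) (auto dest: prob_vec_dim_pos prob_vec_pos)

lemma power_sum_ge_1:
  assumes "prob_vec k p" "r \<le> 1"
  shows "power_sum k r p \<ge> 1"
proof -
  have "p j \<le> p j powr r" if "j < k" for j
    using powr_mono'[OF assms(2), of "p j"] prob_vec_pos[OF assms(1) that]
      prob_vec_le_1[OF assms(1) that] by simp
  then have "(\<Sum>j<k. p j) \<le> power_sum k r p"
    unfolding power_sum_def by (intro sum_mono) simp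
  then show ?thesis
    using assms(1) by (simp add: prob_vec_sum)
qed

lemma ratioR_eq_power_sum:
  assumes "prob_vec k p"
  shows "ratioR k p = power_sum k (1/2) p / power_sum k (2/3) p powr (3/2)"
  using power_sum_pos[OF assms, of "1/2"] power_sum_pos[OF assms, of "2/3"]
  by (simp add: ratioR_def lr_norm_def power_sum_def powr_powr)

lemma power_sum_two_thirds_le:
  assumes "prob_vec k p"
  shows "power_sum k (2/3) p powr (3/2) \<le> power_sum k (1/2) p"
proof -
  have "power_sum k (2/3) p = (\<Sum>j<k. (p j powr (1/2)) powr (2/3) * p j powr (1 - 2/3))"
    unfolding power_sum_def
    by (intro sum.cong) (simp_all add: powr_powr flip: powr_add)
  also have "\<dots> \<le> power_sum k (1/2) p powr (2/3) * (\<Sum>j<k. p j) powr (1 - 2/3)"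
    unfolding power_sum_def
    by (intro Holder_ineq_sum) (use prob_vec_pos[OF assms] in \<open>fastforce+\<close>)
  also have "\<dots> = power_sum k (1/2) p powr (2/3)"
    by (simp add: prob_vec_sum[OF assms])
  finally have "power_sum k (2/3) p powr (3/2) \<le> (power_sum k (1/2) p powr (2/3)) powr (3/2)"
    using power_sum_pos[OF assms] by (intro powr_mono2) (auto intro: less_imp_le)
  then show ?thesis
    using power_sum_pos[OF assms, of "1/2"] by (simp add: powr_powr)
qed

lemma power_sum_half_le:
  assumes "prob_vec k p"
  shows "power_sum k (1/2) p \<le> power_sum k (2/3) p powr (3/4) * real k powr (1/4)"
proof -
  have "power_sum k (1/2) p = (\<Sum>j<k. (p j powr (2/3)) powr (3/4) * 1 powr (1 - 3/4))"
    unfolding power_sum_def by (intro sum.cong) (simp_all add: powr_powr)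
  also have "\<dots> \<le> power_sum k (2/3) p powr (3/4) * (\<Sum>j<k. 1) powr (1 - 3/4)"
    unfolding power_sum_def
    by (intro Holder_ineq_sum) (use prob_vec_pos[OF assms] in \<open>fastforce+\<close>)
  finally show ?thesis
    by simp
qed

lemma ratioR_ge_1: "prob_vec k p \<Longrightarrow> ratioR k p \<ge> 1"
  using power_sum_two_thirds_le[of k p] power_sum_pos[of k p "2/3"]
  by (simp add: ratioR_eq_power_sum)

lemma ratioR_le_powr_quarter:
  assumes "prob_vec k p"
  shows "ratioR k p \<le> real k powr (1/4)"
proof -
  define B where "B = power_sum k (2/3) p"
  have "B \<ge> 1"
    unfolding B_def using assms by (rule power_sum_ge_1) simp
  have "ratioR k p \<le> B powr (3/4) * real k powr (1/4) / B powr (3/2)"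
    unfolding ratioR_eq_power_sum[OF assms] B_def
    using power_sum_half_le[OF assms] power_sum_pos[OF assms] by (intro divide_right_mono) auto
  also have "\<dots> = real k powr (1/4) / B powr (3/4)"
    using \<open>B \<ge> 1\<close> by (simp add: field_simps flip: powr_add)
  also have "\<dots> \<le> real k powr (1/4)"
    using ge_one_powr_ge_zero[OF \<open>B \<ge> 1\<close>, of "3/4"]
    by (simp add: divide_le_eq mult_le_cancel_left1)
  finally show ?thesis .
qed

lemma bdd_above_ratioR: "bdd_above (ratioR k ` {p. prob_vec k p})"
  using ratioR_le_powr_quarter by (intro bdd_aboveI[of _ "real k powr (1/4)"]) auto

definition spike_vec :: "nat \<Rightarrow> nat \<Rightarrow> real" where
  "spike_vec m j = (if j = 0 then 1 - real m powr (-1/2) / 2 else real m powr (-3/2) / 2)"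

lemma power_sum_spike_vec:
  "power_sum (Suc m) r (spike_vec m)
     = (1 - real m powr (-1/2) / 2) powr r + real m * (real m powr (-3/2) / 2) powr r"
  unfolding power_sum_def sum.lessThan_Suc_shift by (simp add: spike_vec_def)

lemma prob_vec_spike_vec:
  assumes "m \<ge> 1"
  shows "prob_vec (Suc m) (spike_vec m)"
  unfolding prob_vec_def
proof
  have "real m powr (-1/2) \<le> 1"
    using assms by (simp add: powr_minus_divide ge_one_powr_ge_zero)
  then show "\<forall>j<Suc m. spike_vec m j > 0"
    by (simp add: spike_vec_def)
  have "real m * real m powr (-3/2) = real m powr (-1/2)"
    by (simp add: powr_mult_base)
  then show "(\<Sum>j<Suc m. spike_vec m j) = 1"
    unfolding sum.lessThan_Suc_shift by (simp add: spike_vec_def)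
qed

lemma power_sum_half_spike_vec_ge:
  assumes "m \<ge> 1"
  shows "real m powr (1/4) / 2 \<le> power_sum (Suc m) (1/2) (spike_vec m)"
proof -
  have "real m * (real m powr (-3/2) / 2) powr (1/2) = real m powr (1/4) / sqrt 2"
    by (simp add: powr_divide powr_powr powr_mult_base powr_half_sqrt)
  also have "\<dots> \<ge> real m powr (1/4) / 2"
    using real_sqrt_le_mono[of 2 4] by (intro divide_left_mono) auto
  finally show ?thesis
    unfolding power_sum_spike_vec by (intro add_increasing) auto
qed

lemma power_sum_two_thirds_spike_vec_le:
  assumes "m \<ge> 1"
  shows "power_sum (Suc m) (2/3) (spike_vec m) \<le> 2"
proof -
  have "real m * (real m powr (-3/2) / 2) powr (2/3) = 1 / 2 powr (2/3)"
    using assms by (simp add: powr_divide powr_powr powr_mult_base)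
  also have "\<dots> \<le> 1"
    using ge_one_powr_ge_zero[of 2 "2/3"] by simp
  finally have "real m * (real m powr (-3/2) / 2) powr (2/3) \<le> 1" .
  moreover have "(1 - real m powr (-1/2) / 2) powr (2/3) \<le> 1"
    using prob_vec_le_1[OF prob_vec_spike_vec[OF assms], of 0]
      prob_vec_pos[OF prob_vec_spike_vec[OF assms], of 0]
    by (intro powr_le1) (auto simp: spike_vec_def)
  ultimately show ?thesis
    unfolding power_sum_spike_vec by simp
qed

lemma ratioR_spike_vec_ge:
  assumes "m \<ge> 1"
  shows "real m powr (1/4) / 8 \<le> ratioR (Suc m) (spike_vec m)"
proof -
  have pv: "prob_vec (Suc m) (spike_vec m)"
    using assms by (rule prob_vec_spike_vec)
  have "power_sum (Suc m) (2/3) (spike_vec m) powr (3/2) \<le> 2 powr (3/2)"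
    using power_sum_two_thirds_spike_vec_le[OF assms] power_sum_pos[OF pv, of "2/3"]
    by (intro powr_mono2) (auto intro: less_imp_le)
  also have "(2::real) powr (3/2) \<le> 2 powr 2"
    by (intro powr_mono) auto
  finally have "power_sum (Suc m) (2/3) (spike_vec m) powr (3/2) \<le> 4"
    by simp
  then have "power_sum (Suc m) (1/2) (spike_vec m) / 4 \<le> ratioR (Suc m) (spike_vec m)"
    unfolding ratioR_eq_power_sum[OF pv]
    using power_sum_pos[OF pv, of "1/2"] power_sum_pos[OF pv, of "2/3"]
    by (intro divide_left_mono) (auto intro: less_imp_le)
  then show ?thesis
    using power_sum_half_spike_vec_ge[OF assms] by simp
qed

lemma supR_bounds:
  assumes "k \<ge> 2"
  shows "real k powr (1/4) / 16 \<le> supR k" "supR k \<le> real k powr (1/4)"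
proof -
  obtain m where k: "k = Suc m" and "m \<ge> 1"
    using assms by (cases k) auto
  have pv: "prob_vec k (spike_vec m)"
    unfolding k using \<open>m \<ge> 1\<close> by (rule prob_vec_spike_vec)
  have "real k powr (1/4) \<le> (2 * real m) powr (1/4)"
    using k \<open>m \<ge> 1\<close> by (intro powr_mono2) auto
  also have "\<dots> \<le> 2 * real m powr (1/4)"
    using powr_mono[of "1/4" 1 2] by (simp add: powr_mult mult_right_mono)
  finally have "real k powr (1/4) / 16 \<le> ratioR k (spike_vec m)"
    using ratioR_spike_vec_ge[OF \<open>m \<ge> 1\<close>] k by simp
  also have "\<dots> \<le> supR k"
    unfolding supR_def using pv by (intro cSup_upper bdd_above_ratioR) auto
  finally show "real k powr (1/4) / 16 \<le> supR k" .
  show "supR k \<le> real k powr (1/4)"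
    unfolding supR_def using pv ratioR_le_powr_quarter by (intro cSup_least) auto
qed

theorem lemma5:
  shows "(\<forall>k p. prob_vec k p \<longrightarrow> ratioR k p \<ge> 1)
       \<and> (\<forall>k\<ge>1. bdd_above (ratioR k ` {p. prob_vec k p}))
       \<and> (\<lambda>k. supR k) \<in> \<Theta>(\<lambda>k. real k powr (1/4))"
proof (intro conjI allI impI)
  show "prob_vec k p \<Longrightarrow> ratioR k p \<ge> 1" for k p
    by (rule ratioR_ge_1)
  show "bdd_above (ratioR k ` {p. prob_vec k p})" for k
    by (rule bdd_above_ratioR)
  have "eventually (\<lambda>k. 1/16 * norm (real k powr (1/4)) \<le> norm (supR k)
                      \<and> norm (supR k) \<le> 1 * norm (real k powr (1/4))) at_top"
  proof (rule eventually_sequentiallyI[of 2])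
    fix k :: nat
    assume "k \<ge> 2"
    then show "1/16 * norm (real k powr (1/4)) \<le> norm (supR k)
             \<and> norm (supR k) \<le> 1 * norm (real k powr (1/4))"
      using supR_bounds[of k] by auto
  qed
  then show "(\<lambda>k. supR k) \<in> \<Theta>(\<lambda>k. real k powr (1/4))"
    by (intro bigthetaI'[of "1/16" 1]) auto
qed

end
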